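(* Let $\Omega\in\mathscr A$ with $\mathfrak m(\Omega)<+\infty$ and for $\kappa>0$ let $\mathcal J_\kappa[F]:=P(F)-\kappa\,\mathfrak m(F)$ for measurable $F\subset\Omega$. If (P.4) and (P.5) hold, then $\mathcal J_\kappa$ admits a minimizer among measurable subsets of $\Omega$. If in addition (P.1) holds, then: (i) if $\mathcal J_\kappa$ has a minimizer $E$ with $\mathfrak m(E)>0$, then $\Omega$ is $1$-admissible and $\kappa\ge h_1(\Omega)$; (ii) if $\Omega$ is $1$-admissible and $\kappa>h_1(\Omega)$, then $\mathcal J_\kappa$ has a minimizer with positive $\mathfrak m$-measure; (iii) if $\Omega$ has a $1$-Cheeger set, then $\mathcal J_\kappa$ has a minimizer with positive $\mathfrak m$-measure if and only if $\kappa\ge h_1(\Omega)$.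
   Context: $(X,\mathscr A,\mathfrak m)$ is a non-negative $\sigma$-finite measure space; for $A,B\in\mathscr A$, "$A\subset B$" means $\mathfrak m(A\setminus B)=0$. $P\colon\mathscr A\to[0,+\infty]$ is a proper functional. (P.1): $P(\emptyset)=0$. (P.4): if $\chi_{E_k}\to\chi_E$ in $L^1(X,\mathfrak m)$ then $P(E)\le\liminf_k P(E_k)$. (P.5): for every $c\ge0$, $\{\chi_E:E\in\mathscr A,\ P(E)\le c\}$ is compact in $L^1(X,\mathfrak m)$. $\Omega$ is $1$-admissible if it contains some $E$ with $0<\mathfrak m(E)<+\infty$, $P(E)<+\infty$; $h_1(\Omega)=\inf\{P(E)/\mathfrak m(E): E\subset\Omega,\ 0<\mathfrak m(E)<+\infty,\ P(E)<+\infty\}$; a set attaining it is a $1$-Cheeger set of $\Omega$. *)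

theory Defs
  imports "HOL-Analysis.Analysis"
begin

definition ae_subset :: "'a measure \<Rightarrow> 'a set \<Rightarrow> 'a set \<Rightarrow> bool" where
  "ae_subset M A B \<longleftrightarrow> emeasure M (A - B) = 0"

definition L1_dist_ind :: "'a measure \<Rightarrow> 'a set \<Rightarrow> 'a set \<Rightarrow> ennreal" where
  "L1_dist_ind M A B = (\<integral>\<^sup>+ x. ennreal \<bar>(indicator A x :: real) - indicator B x\<bar> \<partial>M)"

definition ind_L1_conv :: "'a measure \<Rightarrow> (nat \<Rightarrow> 'a set) \<Rightarrow> 'a set \<Rightarrow> bool" where
  "ind_L1_conv M Es E \<longleftrightarrow>
     E \<in> sets M \<and> emeasure M E < \<infinity> \<and>
     (\<forall>k. Es k \<in> sets M \<and> emeasure M (Es k) < \<infinity>) \<and>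
     ((\<lambda>k. L1_dist_ind M (Es k) E) \<longlonglongrightarrow> 0)"

definition P1 :: "('a set \<Rightarrow> ennreal) \<Rightarrow> bool" where
  "P1 P \<longleftrightarrow> P {} = 0"

definition P4 :: "'a measure \<Rightarrow> ('a set \<Rightarrow> ennreal) \<Rightarrow> bool" where
  "P4 M P \<longleftrightarrow> (\<forall>Es E. ind_L1_conv M Es E \<longrightarrow> P E \<le> liminf (\<lambda>k. P (Es k)))"

text \<open>(P.5): compactness in L^1 (a metric space), stated as sequential compactness of
  the set of characteristic functions chi_E (E measurable, chi_E in L^1) with P(E) \<le> c.\<close>
definition P5 :: "'a measure \<Rightarrow> ('a set \<Rightarrow> ennreal) \<Rightarrow> bool" where
  "P5 M P \<longleftrightarrow> (\<forall>(c::real) (Es :: nat \<Rightarrow> 'a set). c \<ge> 0 \<longrightarrow>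
      (\<forall>k. Es k \<in> sets M \<and> emeasure M (Es k) < \<infinity> \<and> P (Es k) \<le> ennreal c) \<longrightarrow>
      (\<exists>(r :: nat \<Rightarrow> nat) E. strict_mono r \<and> P E \<le> ennreal c \<and> ind_L1_conv M (Es \<circ> r) E))"

definition proper_functional :: "('a set \<Rightarrow> ennreal) \<Rightarrow> bool" where
  "proper_functional P \<longleftrightarrow> (\<exists>E. P E < \<infinity>)"

definition admissible_set :: "'a measure \<Rightarrow> ('a set \<Rightarrow> ennreal) \<Rightarrow> 'a set \<Rightarrow> 'a set \<Rightarrow> bool" where
  "admissible_set M P \<Omega> E \<longleftrightarrow> E \<in> sets M \<and> ae_subset M E \<Omega> \<and>
     0 < emeasure M E \<and> emeasure M E < \<infinity> \<and> P E < \<infinity>"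

definition one_admissible :: "'a measure \<Rightarrow> ('a set \<Rightarrow> ennreal) \<Rightarrow> 'a set \<Rightarrow> bool" where
  "one_admissible M P \<Omega> \<longleftrightarrow> (\<exists>E. admissible_set M P \<Omega> E)"

definition h1 :: "'a measure \<Rightarrow> ('a set \<Rightarrow> ennreal) \<Rightarrow> 'a set \<Rightarrow> real" where
  "h1 M P \<Omega> = Inf {enn2real (P E) / measure M E | E. admissible_set M P \<Omega> E}"

definition cheeger_set :: "'a measure \<Rightarrow> ('a set \<Rightarrow> ennreal) \<Rightarrow> 'a set \<Rightarrow> 'a set \<Rightarrow> bool" where
  "cheeger_set M P \<Omega> E \<longleftrightarrow> admissible_set M P \<Omega> E \<and>
     enn2real (P E) / measure M E = h1 M P \<Omega>"

definition Jk :: "'a measure \<Rightarrow> ('a set \<Rightarrow> ennreal) \<Rightarrow> real \<Rightarrow> 'a set \<Rightarrow> ereal" where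
  "Jk M P \<kappa> F = enn2ereal (P F) - ereal (\<kappa> * measure M F)"

definition Jk_minimizer :: "'a measure \<Rightarrow> ('a set \<Rightarrow> ennreal) \<Rightarrow> real \<Rightarrow> 'a set \<Rightarrow> 'a set \<Rightarrow> bool" where
  "Jk_minimizer M P \<kappa> \<Omega> E \<longleftrightarrow> E \<in> sets M \<and> ae_subset M E \<Omega> \<and>
     (\<forall>F. F \<in> sets M \<and> ae_subset M F \<Omega> \<longrightarrow> Jk M P \<kappa> E \<le> Jk M P \<kappa> F)"

end

theory Submission
  imports Defs
begin

text \<open>Existence is the direct method. On sets with \<open>P(F) < \<infinity>\<close> the functional is real and
  bounded below by \<open>-\<kappa> \<mu>(\<Omega>)\<close>, so a minimizing sequence has uniformly bounded \<open>P\<close>; (P.5)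
  extracts an \<open>L\<^sup>1\<close>-convergent subsequence, along which \<open>\<mu>\<close> converges and (P.4) makes \<open>P\<close>
  lower semicontinuous. For the rest, \<open>J\<^sub>\<kappa>[\<emptyset>] = 0\<close> by (P.1), and a set \<open>E\<close> of positive finite
  measure has \<open>J\<^sub>\<kappa>[E] \<le> 0\<close> exactly when \<open>P(E)/\<mu>(E) \<le> \<kappa>\<close>: a minimizer of positive measure
  therefore witnesses \<open>h\<^sub>1(\<Omega>) \<le> \<kappa>\<close>, and conversely an admissible set with ratio at most \<open>\<kappa>\<close>
  does no worse than any null set, so it is a minimizer whenever the minimizer found above is
  null.\<close>

lemma minimizing_sequence:
  fixes f :: "'b \<Rightarrow> real"
  assumes "S \<noteq> {}" and "bdd_below (f ` S)"
  obtains G where "\<And>k. G k \<in> S" and "\<And>k. f (G k) \<le> Inf (f ` S) + 1"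
    and "(\<lambda>k. f (G k)) \<longlonglongrightarrow> Inf (f ` S)"
proof -
  let ?m = "Inf (f ` S)"
  have "\<exists>F\<in>S. f F < ?m + 1 / real (Suc k)" for k
  proof -
    have "\<exists>x\<in>f ` S. x < ?m + 1 / real (Suc k)"
      using assms by (intro cInf_lessD) auto
    then show ?thesis by auto
  qed
  then obtain G where G: "\<And>k. G k \<in> S" "\<And>k. f (G k) < ?m + 1 / real (Suc k)"
    by metis
  have upper: "f (G k) \<le> ?m + 1 / real (Suc k)" for k
    using G(2) by (rule less_imp_le)
  have lower: "?m \<le> f (G k)" for k
    using assms G(1) by (intro cInf_lower) auto
  have upper_lim: "(\<lambda>k. ?m + 1 / real (Suc k)) \<longlonglongrightarrow> ?m + 0"
    by (intro tendsto_add tendsto_const LIMSEQ_Suc[OF lim_inverse_n'])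
  have "(\<lambda>k. f (G k)) \<longlonglongrightarrow> ?m"
    by (rule tendsto_sandwich[where f="\<lambda>k. ?m" and h="\<lambda>k. ?m + 1 / real (Suc k)"])
      (use lower upper upper_lim in simp_all)
  moreover have "f (G k) \<le> ?m + 1" for k
    using upper[of k] by (rule order_trans) simp
  ultimately show ?thesis using G(1) that by blast
qed

lemma L1_dist_ind_eq_emeasure_symdiff:
  assumes "A \<in> sets M" "B \<in> sets M"
  shows "L1_dist_ind M A B = emeasure M ((A - B) \<union> (B - A))"
proof -
  have "\<And>x. ennreal \<bar>(indicator A x :: real) - indicator B x\<bar> = indicator ((A - B) \<union> (B - A)) x"
    by (auto simp: indicator_def)
  then show ?thesis unfolding L1_dist_ind_def using assms by simp
qed

lemma ind_L1_conv_emeasure_symdiff: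
  assumes "ind_L1_conv M Es E"
  shows "(\<lambda>k. emeasure M ((Es k - E) \<union> (E - Es k))) \<longlonglongrightarrow> 0"
  using assms L1_dist_ind_eq_emeasure_symdiff[of "Es _" M E] by (simp add: ind_L1_conv_def)

lemma ind_L1_conv_measure:
  assumes conv: "ind_L1_conv M Es E"
  shows "(\<lambda>k. measure M (Es k)) \<longlonglongrightarrow> measure M E"
proof -
  define D where "D k = (Es k - E) \<union> (E - Es k)" for k
  have fin: "Es k \<in> fmeasurable M" "E \<in> fmeasurable M" for k
    using conv by (auto simp: ind_L1_conv_def fmeasurable_def)
  then have Dfin: "D k \<in> fmeasurable M" for k
    unfolding D_def by (intro fmeasurable.Un fmeasurable.Diff) auto
  have "(\<lambda>k. enn2real (emeasure M (D k))) \<longlonglongrightarrow> enn2real 0"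
    using ind_L1_conv_emeasure_symdiff[OF conv] unfolding D_def by (intro tendsto_enn2real) auto
  then have D0: "(\<lambda>k. measure M (D k)) \<longlonglongrightarrow> 0"
    by (simp add: measure_def)
  have diff_bound: "\<bar>measure M (Es k) - measure M E\<bar> \<le> measure M (D k)" for k
  proof -
    have "measure M (Es k - E) \<le> measure M (D k)" "measure M (E - Es k) \<le> measure M (D k)"
      using fin Dfin by (auto intro!: measure_mono_fmeasurable simp: D_def)
    then show ?thesis
      using measure_diff_le_measure_setdiff[OF fin(1)[of k] fin(2)]
        measure_diff_le_measure_setdiff[OF fin(2) fin(1)[of k]]
      by linarith
  qed
  have "(\<lambda>k. measure M (Es k) - measure M E) \<longlonglongrightarrow> 0"
    by (rule Lim_null_comparison[where g="\<lambda>k. measure M (D k)"]) (simp_all add: diff_bound D0)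
  then show ?thesis by (rule LIM_zero_cancel)
qed

lemma ae_subset_emeasure_le:
  assumes "F \<in> sets M" "\<Omega> \<in> sets M" "ae_subset M F \<Omega>"
  shows "emeasure M F \<le> emeasure M \<Omega>"
proof -
  have "F - \<Omega> \<in> null_sets M" using assms by (auto simp: ae_subset_def null_sets_def)
  then have "emeasure M F = emeasure M (F \<inter> \<Omega>)"
    using assms emeasure_Diff_null_set by (metis Diff_Diff_Int)
  also have "\<dots> \<le> emeasure M \<Omega>" using assms by (intro emeasure_mono) auto
  finally show ?thesis .
qed

lemma ind_L1_conv_ae_subset:
  assumes conv: "ind_L1_conv M Es E" and "\<Omega> \<in> sets M" and sub: "\<And>k. ae_subset M (Es k) \<Omega>"
  shows "ae_subset M E \<Omega>"
proof -
  have sets: "E \<in> sets M" "Es k \<in> sets M" for k using conv by (auto simp: ind_L1_conv_def)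
  have "emeasure M (E - \<Omega>) \<le> emeasure M ((Es k - E) \<union> (E - Es k))" for k
  proof -
    have "emeasure M (E - \<Omega>) \<le> emeasure M ((E - Es k) \<union> (Es k - \<Omega>))"
      using sets assms by (intro emeasure_mono) auto
    also have "\<dots> \<le> emeasure M (E - Es k) + emeasure M (Es k - \<Omega>)"
      using sets assms by (intro emeasure_subadditive) auto
    also have "\<dots> = emeasure M (E - Es k)"
      using sub by (simp add: ae_subset_def)
    also have "\<dots> \<le> emeasure M ((Es k - E) \<union> (E - Es k))"
      using sets by (intro emeasure_mono) auto
    finally show ?thesis .
  qed
  then have "emeasure M (E - \<Omega>) \<le> 0"
    using ind_L1_conv_emeasure_symdiff[OF conv] by (intro LIMSEQ_le_const) auto
  then show ?thesis by (simp add: ae_subset_def)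
qed

lemma P4_le_lim:
  assumes "P4 M P" and conv: "ind_L1_conv M Es E" and fin: "\<And>k. P (Es k) \<noteq> top"
    and lim: "(\<lambda>k. enn2real (P (Es k))) \<longlonglongrightarrow> L"
  shows "P E \<noteq> top" and "enn2real (P E) \<le> L"
proof -
  have L0: "0 \<le> L" using lim by (rule LIMSEQ_le_const) simp
  have "(\<lambda>k. ennreal (enn2real (P (Es k)))) \<longlonglongrightarrow> ennreal L"
    using lim by (rule tendsto_ennrealI)
  then have "(\<lambda>k. P (Es k)) \<longlonglongrightarrow> ennreal L"
    using fin by (simp add: ennreal_enn2real_if)
  then have "liminf (\<lambda>k. P (Es k)) = ennreal L"
    by (intro lim_imp_Liminf) simp_all
  then have PE: "P E \<le> ennreal L"
    using assms(1) conv unfolding P4_def by metis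
  then show "P E \<noteq> top" by (auto simp: top_unique)
  show "enn2real (P E) \<le> L"
    using PE L0 enn2real_mono[of "P E" "ennreal L"] by simp
qed

lemma ind_L1_conv_finite_Jk_lsc:
  assumes "P4 M P" and conv: "ind_L1_conv M Es E" and fin: "\<And>k. P (Es k) \<noteq> top"
    and lim: "(\<lambda>k. enn2real (P (Es k)) - \<kappa> * measure M (Es k)) \<longlonglongrightarrow> m"
  shows "P E \<noteq> top" and "enn2real (P E) - \<kappa> * measure M E \<le> m"
proof -
  have "(\<lambda>k. (enn2real (P (Es k)) - \<kappa> * measure M (Es k)) + \<kappa> * measure M (Es k))
      \<longlonglongrightarrow> m + \<kappa> * measure M E"
    using ind_L1_conv_measure[OF conv] by (intro tendsto_add tendsto_mult tendsto_const lim)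
  then have P_lim: "(\<lambda>k. enn2real (P (Es k))) \<longlonglongrightarrow> m + \<kappa> * measure M E"
    by simp
  show "P E \<noteq> top"
    using P4_le_lim(1)[OF assms(1) conv fin P_lim] .
  show "enn2real (P E) - \<kappa> * measure M E \<le> m"
    using P4_le_lim(2)[OF assms(1) conv fin P_lim] by simp
qed

lemma Jk_finite:
  assumes "P F \<noteq> top"
  shows "Jk M P \<kappa> F = ereal (enn2real (P F) - \<kappa> * measure M F)"
proof -
  have "enn2ereal (P F) = ereal (enn2real (P F))"
    using assms by (metis enn2ereal_ennreal enn2real_nonneg ennreal_enn2real_if)
  then show ?thesis unfolding Jk_def by simp
qed

lemma Jk_top: "P F = top \<Longrightarrow> Jk M P \<kappa> F = \<infinity>"
  unfolding Jk_def by simp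

lemma Jk_minimizer_exists:
  assumes \<Omega>: "\<Omega> \<in> sets M" "emeasure M \<Omega> < \<infinity>" and "\<kappa> > 0"
    and P4: "P4 M P" and P5: "P5 M P"
  shows "\<exists>E. Jk_minimizer M P \<kappa> \<Omega> E"
proof -
  define S where "S = {F. F \<in> sets M \<and> ae_subset M F \<Omega>}"
  define T where "T = {F\<in>S. P F \<noteq> top}"
  define j where "j F = enn2real (P F) - \<kappa> * measure M F" for F
  have S_fin: "emeasure M F < \<infinity>" if "F \<in> S" for F
    using ae_subset_emeasure_le[of F M \<Omega>] that \<Omega> unfolding S_def by auto
  have S_measure: "\<kappa> * measure M F \<le> \<kappa> * measure M \<Omega>" if "F \<in> S" for F
    using ae_subset_emeasure_le[of F M \<Omega>] that \<Omega> \<open>\<kappa> > 0\<close> unfolding S_def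
    by (simp add: measure_def enn2real_mono)
  have minimizer_if_min_on_T: "Jk_minimizer M P \<kappa> \<Omega> E" if "E \<in> T" and "\<forall>F\<in>T. j E \<le> j F" for E
  proof -
    have "Jk M P \<kappa> E \<le> Jk M P \<kappa> F" if "F \<in> S" for F
      using \<open>E \<in> T\<close> \<open>\<forall>F\<in>T. j E \<le> j F\<close> \<open>F \<in> S\<close>
      by (cases "P F = top") (auto simp: Jk_top Jk_finite T_def j_def)
    then show ?thesis using \<open>E \<in> T\<close> unfolding Jk_minimizer_def T_def S_def by auto
  qed
  show ?thesis
  proof (cases "T = {}")
    case True
    then have "Jk M P \<kappa> \<Omega> \<le> Jk M P \<kappa> F" if "F \<in> S" for F
      using that unfolding T_def by (auto simp: Jk_top)
    then show ?thesis using \<Omega> unfolding Jk_minimizer_def S_def ae_subset_def by auto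
  next
    case False
    have lower: "- \<kappa> * measure M \<Omega> \<le> j F" if "F \<in> T" for F
    proof -
      have "\<kappa> * measure M F \<le> \<kappa> * measure M \<Omega>" "0 \<le> enn2real (P F)"
        using S_measure that by (auto simp: T_def)
      then show ?thesis unfolding j_def by linarith
    qed
    define m where "m = Inf (j ` T)"
    have bdd: "bdd_below (j ` T)" using lower by (intro bdd_belowI2)
    obtain G where G: "\<And>k. G k \<in> T" "\<And>k. j (G k) \<le> m + 1" "(\<lambda>k. j (G k)) \<longlonglongrightarrow> m"
      using minimizing_sequence[OF False bdd] unfolding m_def by blast
    define c where "c = m + 1 + \<kappa> * measure M \<Omega>"
    have "m \<ge> - \<kappa> * measure M \<Omega>" unfolding m_def using False lower by (intro cInf_greatest) auto
    then have "c \<ge> 0" unfolding c_def by simp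
    have "P (G k) \<le> ennreal c" for k
    proof -
      have "enn2real (P (G k)) \<le> c"
        using G(1,2)[of k] S_measure[of "G k"] unfolding j_def c_def T_def by auto
      then show ?thesis
        using G(1)[of k] unfolding T_def by (metis (mono_tags) ennreal_enn2real_if ennreal_leI mem_Collect_eq)
    qed
    then obtain r E where "strict_mono r" and conv: "ind_L1_conv M (G \<circ> r) E"
      using P5 \<open>c \<ge> 0\<close> G(1) S_fin unfolding P5_def T_def S_def by blast
    then have "(\<lambda>k. j ((G \<circ> r) k)) \<longlonglongrightarrow> m"
      using LIMSEQ_subseq_LIMSEQ[OF G(3)] by (simp add: comp_def)
    moreover have "P ((G \<circ> r) k) \<noteq> top" for k using G(1) by (simp add: T_def)
    ultimately have "P E \<noteq> top" and "j E \<le> m"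
      using ind_L1_conv_finite_Jk_lsc[OF P4 conv] unfolding j_def by blast+
    moreover have "ae_subset M E \<Omega>"
      using G(1) \<Omega>(1) by (intro ind_L1_conv_ae_subset[OF conv]) (auto simp: T_def S_def)
    moreover have "E \<in> sets M" using conv by (simp add: ind_L1_conv_def)
    ultimately have "E \<in> T" and "j E \<le> m" unfolding T_def S_def by auto
    moreover have "m \<le> j F" if "F \<in> T" for F
      unfolding m_def using bdd that by (intro cInf_lower) auto
    ultimately show ?thesis using minimizer_if_min_on_T by force
  qed
qed

lemma admissible_set_measure_pos:
  "admissible_set M P \<Omega> E \<Longrightarrow> measure M E > 0"
  unfolding admissible_set_def measure_def by (simp add: enn2real_positive_iff less_top)

lemma Jk_nonpos_iff_ratio_le:
  assumes "admissible_set M P \<Omega> E"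
  shows "Jk M P \<kappa> E \<le> 0 \<longleftrightarrow> enn2real (P E) / measure M E \<le> \<kappa>"
proof -
  have "P E \<noteq> top" using assms by (simp add: admissible_set_def less_top)
  then show ?thesis
    using admissible_set_measure_pos[OF assms] by (simp add: Jk_finite divide_le_eq zero_ereal_def)
qed

lemma h1_le_ratio:
  assumes "admissible_set M P \<Omega> E"
  shows "h1 M P \<Omega> \<le> enn2real (P E) / measure M E"
  unfolding h1_def using assms by (intro cInf_lower) (auto intro!: bdd_belowI[where m=0])

lemma Jk_minimizer_pos_imp_admissible:
  assumes "P1 P" "\<Omega> \<in> sets M" "emeasure M \<Omega> < \<infinity>"
    and E: "Jk_minimizer M P \<kappa> \<Omega> E" "emeasure M E > 0"
  shows "admissible_set M P \<Omega> E" and "enn2real (P E) / measure M E \<le> \<kappa>"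
proof -
  have "Jk M P \<kappa> E \<le> Jk M P \<kappa> {}"
    using E unfolding Jk_minimizer_def ae_subset_def by simp
  also have "Jk M P \<kappa> {} = 0"
    using \<open>P1 P\<close> enn2ereal_ennreal[of 0] unfolding Jk_def P1_def by simp
  finally have J0: "Jk M P \<kappa> E \<le> 0" .
  then have "P E \<noteq> top" by (auto simp: Jk_top)
  moreover have "emeasure M E < \<infinity>"
    using E assms(2,3) ae_subset_emeasure_le[of E M \<Omega>] unfolding Jk_minimizer_def by auto
  ultimately show adm: "admissible_set M P \<Omega> E"
    using E unfolding Jk_minimizer_def admissible_set_def by (simp add: less_top)
  show "enn2real (P E) / measure M E \<le> \<kappa>"
    using J0 Jk_nonpos_iff_ratio_le[OF adm] by simp
qed

lemma Jk_minimizer_pos_exists: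
  assumes \<Omega>: "\<Omega> \<in> sets M" "emeasure M \<Omega> < \<infinity>" and "\<kappa> > 0"
    and P4: "P4 M P" and P5: "P5 M P"
    and C: "admissible_set M P \<Omega> C" "enn2real (P C) / measure M C \<le> \<kappa>"
  shows "\<exists>E. Jk_minimizer M P \<kappa> \<Omega> E \<and> emeasure M E > 0"
proof -
  obtain E where E: "Jk_minimizer M P \<kappa> \<Omega> E"
    using Jk_minimizer_exists[OF \<Omega> \<open>\<kappa> > 0\<close> P4 P5] by blast
  show ?thesis
  proof (cases "emeasure M E > 0")
    case True then show ?thesis using E by blast
  next
    case False
    then have "measure M E = 0" by (simp add: measure_def zero_less_iff_neq_zero)
    then have "0 \<le> Jk M P \<kappa> E" by (simp add: Jk_def)
    moreover have "Jk M P \<kappa> C \<le> 0" using Jk_nonpos_iff_ratio_le[OF C(1)] C(2) by simp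
    ultimately have "Jk_minimizer M P \<kappa> \<Omega> C"
      using C(1) E unfolding Jk_minimizer_def admissible_set_def by (meson order_trans)
    then show ?thesis using C(1) unfolding admissible_set_def by blast
  qed
qed

theorem theorem4p6:
  fixes M :: "'a measure" and P :: "'a set \<Rightarrow> ennreal" and \<Omega> :: "'a set" and \<kappa> :: real
  assumes "sigma_finite_measure M"
    and "proper_functional P"
    and "\<Omega> \<in> sets M" and "emeasure M \<Omega> < \<infinity>"
    and "\<kappa> > 0"
    and "P4 M P" and "P5 M P"
  shows "(\<exists>E. Jk_minimizer M P \<kappa> \<Omega> E) \<and>
    (P1 P \<longrightarrow>
      ((\<exists>E. Jk_minimizer M P \<kappa> \<Omega> E \<and> emeasure M E > 0) \<longrightarrow>
          one_admissible M P \<Omega> \<and> \<kappa> \<ge> h1 M P \<Omega>) \<and>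
      (one_admissible M P \<Omega> \<and> \<kappa> > h1 M P \<Omega> \<longrightarrow>
          (\<exists>E. Jk_minimizer M P \<kappa> \<Omega> E \<and> emeasure M E > 0)) \<and>
      ((\<exists>C. cheeger_set M P \<Omega> C) \<longrightarrow>
          ((\<exists>E. Jk_minimizer M P \<kappa> \<Omega> E \<and> emeasure M E > 0) \<longleftrightarrow> \<kappa> \<ge> h1 M P \<Omega>)))"
proof -
  note pos_exists = Jk_minimizer_pos_exists[OF assms(3-7)]
  have necessary: "one_admissible M P \<Omega> \<and> \<kappa> \<ge> h1 M P \<Omega>"
    if "P1 P" "Jk_minimizer M P \<kappa> \<Omega> E" "emeasure M E > 0" for E
    using Jk_minimizer_pos_imp_admissible[OF that(1) assms(3,4) that(2,3)] h1_le_ratio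
    unfolding one_admissible_def by fastforce
  have above_h1: "\<exists>E. Jk_minimizer M P \<kappa> \<Omega> E \<and> emeasure M E > 0"
    if admissible: "one_admissible M P \<Omega>" and gt: "\<kappa> > h1 M P \<Omega>"
  proof -
    have "{enn2real (P E) / measure M E | E. admissible_set M P \<Omega> E} \<noteq> {}"
      using admissible unfolding one_admissible_def by auto
    then obtain C where "admissible_set M P \<Omega> C" "enn2real (P C) / measure M C < \<kappa>"
      using cInf_lessD[OF _ gt[unfolded h1_def]] by auto
    then show ?thesis using pos_exists by simp
  qed
  have at_cheeger: "\<exists>E. Jk_minimizer M P \<kappa> \<Omega> E \<and> emeasure M E > 0"
    if "cheeger_set M P \<Omega> C" "\<kappa> \<ge> h1 M P \<Omega>" for C
    using that unfolding cheeger_set_def by (auto intro: pos_exists)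
  show ?thesis
    using Jk_minimizer_exists[OF assms(3-7)] necessary above_h1 at_cheeger by blast
qed

end
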